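(* For $j=1,2$ let $\mathscr T_j$ be a leafless, locally finite rooted directed tree with set of branching vertices $V^{(j)}_\prec$, and let $S^{(j)}_{\lambda,1}$ be the Dirichlet shift with parameter $q=1$ on $\mathscr T_j$. Then $S^{(1)}_{\lambda,1}$ is unitarily equivalent to $S^{(2)}_{\lambda,1}$ if and only if $$\sum_{v\in V^{(1)}_\prec}\big(\mathrm{card}(\mathsf{Chi}(v))-1\big)=\sum_{v\in V^{(2)}_\prec}\big(\mathrm{card}(\mathsf{Chi}(v))-1\big)$$ (as cardinal numbers, possibly infinite).
   Context: A directed tree $\mathscr T=(V,\mathcal E)$ is a directed graph with no circuits, connected, in which every non-root vertex has a unique parent; rooted means a unique vertex $\mathsf{root}$ has no parent. $\mathsf{Chi}(v)=\{u:(v,u)\in\mathcal E\}$; $\mathsf{Chi}^{\langle n\rangle}$ denotes the $n$-fold iterate. Locally finite: each $\mathsf{Chi}(v)$ finite; leafless: each $\mathsf{Chi}(v)$ nonempty; $V$ is countably infinite. Depth $n_v$: the unique $n$ with $v\in\mathsf{Chi}^{\langle n\rangle}(\mathsf{root})$. Branching vertices: $V_\prec=\{v:\mathrm{card}(\mathsf{Chi}(v))\geqslant2\}$. The weighted shift on $\ell^2(V)$ (orthonormal basis $\{e_u\}$) with weights $\{\lambda_u\}_{u\neq\mathsf{root}}$ is $S_\lambda e_v=\sum_{u\in\mathsf{Chi}(v)}\lambda_ue_u$. For real $q\geqslant1$ the Dirichlet shift $S_{\lambda,q}$ has weights $\lambda_{u,q}=\frac{1}{\sqrt{\mathrm{card}(\mathsf{Chi}(v))}}\sqrt{\frac{n_v+q}{n_v+1}}$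 for $u\in\mathsf{Chi}(v)$. *)

theory Defs
  imports "HOL-Analysis.Analysis"
begin

definition directed_tree :: "'a set \<Rightarrow> ('a \<times> 'a) set \<Rightarrow> bool" where
  "directed_tree V E \<longleftrightarrow>
     E \<subseteq> V \<times> V \<and>
     (\<forall>v. (v, v) \<notin> E\<^sup>+) \<and>
     (\<forall>u\<in>V. \<forall>v\<in>V. (u, v) \<in> (E \<union> E\<inverse>)\<^sup>*) \<and>
     (\<forall>v u w. (u, v) \<in> E \<and> (w, v) \<in> E \<longrightarrow> u = w)"

definition Chi :: "('a \<times> 'a) set \<Rightarrow> 'a \<Rightarrow> 'a set" where
  "Chi E v = {u. (v, u) \<in> E}"

definition is_root :: "'a set \<Rightarrow> ('a \<times> 'a) set \<Rightarrow> 'a \<Rightarrow> bool" where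
  "is_root V E r \<longleftrightarrow> r \<in> V \<and> (\<forall>u. (u, r) \<notin> E)"

definition rooted_directed_tree :: "'a set \<Rightarrow> ('a \<times> 'a) set \<Rightarrow> 'a \<Rightarrow> bool" where
  "rooted_directed_tree V E r \<longleftrightarrow>
     directed_tree V E \<and> is_root V E r \<and> (\<forall>r'. is_root V E r' \<longrightarrow> r' = r)"

definition locally_finite :: "'a set \<Rightarrow> ('a \<times> 'a) set \<Rightarrow> bool" where
  "locally_finite V E \<longleftrightarrow> (\<forall>v\<in>V. finite (Chi E v))"

definition leafless :: "'a set \<Rightarrow> ('a \<times> 'a) set \<Rightarrow> bool" where
  "leafless V E \<longleftrightarrow> (\<forall>v\<in>V. Chi E v \<noteq> {})"

definition branching :: "'a set \<Rightarrow> ('a \<times> 'a) set \<Rightarrow> 'a set" where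
  "branching V E = {v \<in> V. card (Chi E v) \<ge> 2}"

definition parent :: "('a \<times> 'a) set \<Rightarrow> 'a \<Rightarrow> 'a" where
  "parent E u = (THE v. (v, u) \<in> E)"

definition Chi_set :: "('a \<times> 'a) set \<Rightarrow> 'a set \<Rightarrow> 'a set" where
  "Chi_set E W = (\<Union>w\<in>W. Chi E w)"

definition depth :: "('a \<times> 'a) set \<Rightarrow> 'a \<Rightarrow> 'a \<Rightarrow> nat" where
  "depth E r v = (THE n. v \<in> (Chi_set E ^^ n) {r})"

definition ell2 :: "'a set \<Rightarrow> ('a \<Rightarrow> complex) set" where
  "ell2 V = {f. (\<forall>x. x \<notin> V \<longrightarrow> f x = 0) \<and> (\<lambda>x. (cmod (f x))\<^sup>2) summable_on V}"

definition ell2_normsq :: "'a set \<Rightarrow> ('a \<Rightarrow> complex) \<Rightarrow> real" where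
  "ell2_normsq V f = (\<Sum>\<^sub>\<infinity>x\<in>V. (cmod (f x))\<^sup>2)"

text \<open>Weighted shift: (S f)(u) = \<lambda>_u f(parent u) for u \<noteq> root, (S f)(root) = 0;
  equivalently S e_v = \<Sum>_{u \<in> Chi v} \<lambda>_u e_u.\<close>
definition weighted_shift ::
  "'a set \<Rightarrow> ('a \<times> 'a) set \<Rightarrow> 'a \<Rightarrow> ('a \<Rightarrow> real) \<Rightarrow> ('a \<Rightarrow> complex) \<Rightarrow> ('a \<Rightarrow> complex)" where
  "weighted_shift V E r lam f =
     (\<lambda>u. if u \<in> V \<and> u \<noteq> r then complex_of_real (lam u) * f (parent E u) else 0)"

definition dirichlet_weight :: "('a \<times> 'a) set \<Rightarrow> 'a \<Rightarrow> real \<Rightarrow> 'a \<Rightarrow> real" where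
  "dirichlet_weight E r q u =
     (let v = parent E u; n = real (depth E r v) in
      (1 / sqrt (real (card (Chi E v)))) * sqrt ((n + q) / (n + 1)))"

definition dirichlet_shift ::
  "'a set \<Rightarrow> ('a \<times> 'a) set \<Rightarrow> 'a \<Rightarrow> real \<Rightarrow> ('a \<Rightarrow> complex) \<Rightarrow> ('a \<Rightarrow> complex)" where
  "dirichlet_shift V E r q = weighted_shift V E r (dirichlet_weight E r q)"

definition unitarily_equivalent ::
  "'a set \<Rightarrow> (('a \<Rightarrow> complex) \<Rightarrow> ('a \<Rightarrow> complex)) \<Rightarrow>
   'b set \<Rightarrow> (('b \<Rightarrow> complex) \<Rightarrow> ('b \<Rightarrow> complex)) \<Rightarrow> bool" where
  "unitarily_equivalent V1 S1 V2 S2 \<longleftrightarrow>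
     (\<exists>U. bij_betw U (ell2 V1) (ell2 V2) \<and>
          (\<forall>f\<in>ell2 V1. \<forall>g\<in>ell2 V1. U (\<lambda>x. f x + g x) = (\<lambda>y. U f y + U g y)) \<and>
          (\<forall>f\<in>ell2 V1. \<forall>c. U (\<lambda>x. c * f x) = (\<lambda>y. c * U f y)) \<and>
          (\<forall>f\<in>ell2 V1. ell2_normsq V2 (U f) = ell2_normsq V1 f) \<and>
          (\<forall>f\<in>ell2 V1. U (S1 f) = S2 (U f)))"

end

theory Submission
  imports Defs
begin

text \<open>For \<open>q = 1\<close> all Dirichlet weights on the children of a vertex \<open>v\<close> equal
  \<open>1 / sqrt (card (Chi v))\<close>, so \<open>S\<close> is an isometry whose adjoint averages over children.
  Expanding the restriction of a vector to the children of each vertex in the discrete Fourier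
  basis (whose zeroth vector is the constant one) yields an orthonormal basis \<open>w\<^sub>j\<close> of the
  kernel of the adjoint, indexed by \<open>J = {root} \<union> {(v, t) | 0 < t < card (Chi v)}\<close>, and the
  vectors \<open>S\<^sup>n w\<^sub>j\<close> form an orthonormal basis of \<open>\<ell>\<^sup>2(V)\<close> (the Wold decomposition).
  Hence \<open>S\<close> is unitarily equivalent to the unilateral shift of multiplicity
  \<open>card J = 1 + \<Sum>v. (card (Chi v) - 1)\<close>. Unilateral shifts are unitarily equivalent exactly
  when their multiplicities agree, the multiplicity being the codimension of the range.\<close>

lemma ennreal_infsum_eq_SUP:
  "infsum (f :: 'x \<Rightarrow> ennreal) A = (SUP F\<in>{F. finite F \<and> F \<subseteq> A}. sum f F)"
  by (rule nonneg_infsum_complete) simp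

lemma ennreal_infsum_Sigma_finite:
  fixes f :: "'x \<times> 'y \<Rightarrow> ennreal"
  assumes fin: "\<And>x. x \<in> A \<Longrightarrow> finite (B x)"
  shows "infsum f (Sigma A B) = infsum (\<lambda>x. \<Sum>y\<in>B x. f (x, y)) A"
proof (rule antisym)
  show "infsum f (Sigma A B) \<le> infsum (\<lambda>x. \<Sum>y\<in>B x. f (x, y)) A"
    unfolding ennreal_infsum_eq_SUP[of f]
  proof (rule SUP_least)
    fix G assume G: "G \<in> {F. finite F \<and> F \<subseteq> Sigma A B}"
    then have "finite (fst ` G)" "fst ` G \<subseteq> A" by auto
    have "G \<subseteq> Sigma (fst ` G) B" using G by force
    moreover have "finite (Sigma (fst ` G) B)"
      using \<open>finite (fst ` G)\<close> \<open>fst ` G \<subseteq> A\<close> fin by (intro finite_SigmaI) auto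
    ultimately have "sum f G \<le> sum f (Sigma (fst ` G) B)" by (intro sum_mono2) auto
    also have "\<dots> = (\<Sum>x\<in>fst ` G. \<Sum>y\<in>B x. f (x, y))"
      by (subst sum.Sigma) (use \<open>finite (fst ` G)\<close> \<open>fst ` G \<subseteq> A\<close> fin in auto)
    also have "\<dots> \<le> infsum (\<lambda>x. \<Sum>y\<in>B x. f (x, y)) A"
      unfolding ennreal_infsum_eq_SUP[of "\<lambda>x. \<Sum>y\<in>B x. f (x, y)"]
      by (rule SUP_upper) (use \<open>finite (fst ` G)\<close> \<open>fst ` G \<subseteq> A\<close> in auto)
    finally show "sum f G \<le> infsum (\<lambda>x. \<Sum>y\<in>B x. f (x, y)) A" .
  qed
next
  show "infsum (\<lambda>x. \<Sum>y\<in>B x. f (x, y)) A \<le> infsum f (Sigma A B)"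
    unfolding ennreal_infsum_eq_SUP[of "\<lambda>x. \<Sum>y\<in>B x. f (x, y)"]
  proof (rule SUP_least)
    fix F assume F: "F \<in> {F. finite F \<and> F \<subseteq> A}"
    have "(\<Sum>x\<in>F. \<Sum>y\<in>B x. f (x, y)) = sum f (Sigma F B)"
      by (subst sum.Sigma) (use F fin in auto)
    also have "\<dots> \<le> infsum f (Sigma A B)"
      unfolding ennreal_infsum_eq_SUP[of f] by (rule SUP_upper) (use F fin in auto)
    finally show "(\<Sum>x\<in>F. \<Sum>y\<in>B x. f (x, y)) \<le> infsum f (Sigma A B)" .
  qed
qed

lemma ennreal_infsum:
  fixes g :: "'x \<Rightarrow> real"
  assumes "\<And>x. x \<in> A \<Longrightarrow> g x \<ge> 0" and "g summable_on A"
  shows "ennreal (infsum g A) = (\<Sum>\<^sub>\<infinity>x\<in>A. ennreal (g x))"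
proof -
  have "ennreal (infsum g A) = (SUP F\<in>{F. finite F \<and> F \<subseteq> A}. ennreal (sum g F))"
    using assms by (rule infsum_nonneg_is_SUPREMUM_ennreal[rotated])
  also have "\<dots> = (SUP F\<in>{F. finite F \<and> F \<subseteq> A}. \<Sum>x\<in>F. ennreal (g x))"
    by (intro SUP_cong refl sum_ennreal[symmetric]) (use assms in auto)
  finally show ?thesis by (simp only: ennreal_infsum_eq_SUP)
qed

lemma summable_on_iff_ennreal_infsum_finite:
  fixes g :: "'x \<Rightarrow> real"
  assumes nonneg: "\<And>x. x \<in> A \<Longrightarrow> g x \<ge> 0"
  shows "g summable_on A \<longleftrightarrow> (\<Sum>\<^sub>\<infinity>x\<in>A. ennreal (g x)) < \<infinity>"
proof
  assume "g summable_on A"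
  then show "(\<Sum>\<^sub>\<infinity>x\<in>A. ennreal (g x)) < \<infinity>"
    by (simp flip: ennreal_infsum[OF nonneg])
next
  let ?M = "\<Sum>\<^sub>\<infinity>x\<in>A. ennreal (g x)"
  assume finite_sum: "?M < \<infinity>"
  show "g summable_on A"
  proof (rule nonneg_bdd_above_summable_on[OF nonneg bdd_aboveI])
    fix s assume "s \<in> sum g ` {F. F \<subseteq> A \<and> finite F}"
    then obtain F where F: "F \<subseteq> A" "finite F" and s: "s = sum g F" by auto
    have "ennreal (sum g F) = (\<Sum>x\<in>F. ennreal (g x))"
      by (rule sum_ennreal[symmetric]) (use F nonneg in auto)
    also have "\<dots> \<le> ?M"
      unfolding ennreal_infsum_eq_SUP[of "\<lambda>x. ennreal (g x)"] by (rule SUP_upper) (use F in auto)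
    finally have "enn2real (ennreal (sum g F)) \<le> enn2real ?M"
      using finite_sum by (intro enn2real_mono) auto
    then show "s \<le> enn2real ?M"
      using s F nonneg by (simp add: sum_nonneg subset_iff)
  qed
qed

lemma ennreal_infsum_eq_0D:
  fixes h :: "'x \<Rightarrow> ennreal"
  assumes "infsum h A = 0" "x \<in> A"
  shows "h x = 0"
proof -
  have "sum h {x} \<le> infsum h A"
    unfolding ennreal_infsum_eq_SUP[of h] by (rule SUP_upper) (use assms in auto)
  then show ?thesis using assms by simp
qed

definition ecard :: "'x set \<Rightarrow> ennreal" where
  "ecard A = (if finite A then of_nat (card A) else \<infinity>)"

lemma infsum_one_eq_ecard: "(\<Sum>\<^sub>\<infinity>x\<in>A. (1::ennreal)) = ecard A"
proof (cases "finite A")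
  case False
  then show ?thesis
    unfolding ecard_def by (simp add: infsum_superconst_infinite_ennreal[where b=1])
qed (simp add: ecard_def)

lemma countable_ecard_eq_imp_bij:
  assumes "countable A" "countable B" "ecard A = ecard B"
  obtains s where "bij_betw s A B"
proof (cases "finite A")
  case True
  then have "finite B" "card A = card B" using assms(3) by (auto simp: ecard_def split: if_splits)
  then show ?thesis using True that finite_same_card_bij by blast
next
  case False
  then have "infinite B" using assms(3) by (auto simp: ecard_def split: if_splits)
  obtain g1 where "bij_betw g1 (UNIV :: nat set) A" using countable_infiniteE'[OF assms(1) False] .
  moreover obtain g2 where "bij_betw g2 (UNIV :: nat set) B"
    using countable_infiniteE'[OF assms(2) \<open>infinite B\<close>] .
  ultimately have "bij_betw (g2 \<circ> inv_into UNIV g1) A B"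
    by (blast intro: bij_betw_trans bij_betw_inv_into)
  then show ?thesis by (rule that)
qed

definition ell2_ennormsq :: "'x set \<Rightarrow> ('x \<Rightarrow> complex) \<Rightarrow> ennreal" where
  "ell2_ennormsq A f = (\<Sum>\<^sub>\<infinity>x\<in>A. ennreal ((cmod (f x))\<^sup>2))"

lemma ell2_iff: "f \<in> ell2 A \<longleftrightarrow> (\<forall>x. x \<notin> A \<longrightarrow> f x = 0) \<and> ell2_ennormsq A f < \<infinity>"
  unfolding ell2_def ell2_ennormsq_def
  using summable_on_iff_ennreal_infsum_finite[of A "\<lambda>x. (cmod (f x))\<^sup>2"] by auto

lemma ell2_vanishes: "f \<in> ell2 A \<Longrightarrow> x \<notin> A \<Longrightarrow> f x = 0"
  by (simp add: ell2_iff)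

lemma ennreal_ell2_normsq: "f \<in> ell2 A \<Longrightarrow> ennreal (ell2_normsq A f) = ell2_ennormsq A f"
  unfolding ell2_def ell2_normsq_def ell2_ennormsq_def by (rule ennreal_infsum) auto

lemma ell2_normsq_eqI:
  assumes "f \<in> ell2 A" "g \<in> ell2 B" "ell2_ennormsq A f = ell2_ennormsq B g"
  shows "ell2_normsq A f = ell2_normsq B g"
proof -
  have "0 \<le> ell2_normsq A f" "0 \<le> ell2_normsq B g"
    unfolding ell2_normsq_def by (simp_all add: infsum_nonneg)
  then show ?thesis using assms by (simp flip: ennreal_ell2_normsq)
qed

lemma ell2_zero: "(\<lambda>x. 0) \<in> ell2 A"
  by (simp add: ell2_def)

lemma ell2_indicator: "a \<in> A \<Longrightarrow> (\<lambda>x. if x = a then 1 else 0) \<in> ell2 A"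
proof -
  assume "a \<in> A"
  then have "ell2_ennormsq A (\<lambda>x. if x = a then 1 else 0) =
      (\<Sum>\<^sub>\<infinity>x\<in>{a}. ennreal ((cmod (if x = a then 1 else 0))\<^sup>2))"
    unfolding ell2_ennormsq_def by (intro infsum_cong_neutral) auto
  then show ?thesis
    using \<open>a \<in> A\<close> by (simp add: ell2_iff)
qed

lemma ell2_add:
  assumes f: "f \<in> ell2 A" and g: "g \<in> ell2 A"
  shows "(\<lambda>x. f x + g x) \<in> ell2 A"
proof -
  have "(\<lambda>x. 2 * (cmod (f x))\<^sup>2 + 2 * (cmod (g x))\<^sup>2) summable_on A"
    using f g by (intro summable_on_add summable_on_cmult_right) (auto simp: ell2_def)
  moreover have "(cmod (f x + g x))\<^sup>2 \<le> 2 * (cmod (f x))\<^sup>2 + 2 * (cmod (g x))\<^sup>2" for x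
  proof -
    have "(cmod (f x + g x))\<^sup>2 \<le> (cmod (f x) + cmod (g x))\<^sup>2"
      by (intro power_mono norm_triangle_ineq) simp
    also have "\<dots> \<le> 2 * (cmod (f x))\<^sup>2 + 2 * (cmod (g x))\<^sup>2"
      using sum_squares_ge_zero[of "cmod (f x) - cmod (g x)" 0]
      by (simp add: power2_eq_square algebra_simps)
    finally show ?thesis .
  qed
  ultimately have "(\<lambda>x. (cmod (f x + g x))\<^sup>2) summable_on A"
    by (rule summable_on_comparison_test) simp
  then show ?thesis using f g by (auto simp: ell2_def)
qed

lemma ell2_scale:
  assumes "f \<in> ell2 A"
  shows "(\<lambda>x. c * f x) \<in> ell2 A"
proof -
  have "(\<lambda>x. (cmod c)\<^sup>2 * (cmod (f x))\<^sup>2) summable_on A"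
    using assms by (intro summable_on_cmult_right) (auto simp: ell2_def)
  then show ?thesis using assms by (auto simp: ell2_def norm_mult power_mult_distrib)
qed

lemma ell2_lincomb:
  assumes "finite F" "\<And>j. j \<in> F \<Longrightarrow> d j \<in> ell2 A"
  shows "(\<lambda>x. \<Sum>j\<in>F. a j * d j x) \<in> ell2 A"
  using assms
  by (induction F rule: finite_induct) (auto intro!: ell2_add ell2_scale simp: ell2_zero)

lemma ell2_map_lincomb:
  assumes add: "\<forall>f\<in>ell2 A. \<forall>g\<in>ell2 A. U (\<lambda>x. f x + g x) = (\<lambda>y. U f y + U g y)"
    and scale: "\<forall>f\<in>ell2 A. \<forall>c. U (\<lambda>x. c * f x) = (\<lambda>y. c * U f y)"
    and "finite F" "\<And>j. j \<in> F \<Longrightarrow> d j \<in> ell2 A"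
  shows "U (\<lambda>x. \<Sum>j\<in>F. a j * d j x) = (\<lambda>y. \<Sum>j\<in>F. a j * U (d j) y)"
  using assms(3,4)
proof (induction F rule: finite_induct)
  case empty
  show ?case using scale[rule_format, OF ell2_zero, of 0] by simp
next
  case (insert j F)
  have "(\<lambda>x. a j * d j x) \<in> ell2 A" "(\<lambda>x. \<Sum>j\<in>F. a j * d j x) \<in> ell2 A"
    using insert by (auto intro: ell2_scale ell2_lincomb)
  then show ?case
    using insert add[rule_format, of "\<lambda>x. a j * d j x" "\<lambda>x. \<Sum>j\<in>F. a j * d j x"]
      scale[rule_format, of "d j" "a j"]
    by simp
qed

lemma unitarily_equivalent_sym:
  assumes "unitarily_equivalent V1 S1 V2 S2" and S1: "\<And>f. f \<in> ell2 V1 \<Longrightarrow> S1 f \<in> ell2 V1"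
  shows "unitarily_equivalent V2 S2 V1 S1"
proof -
  obtain U where bij: "bij_betw U (ell2 V1) (ell2 V2)"
    and add: "\<forall>f\<in>ell2 V1. \<forall>g\<in>ell2 V1. U (\<lambda>x. f x + g x) = (\<lambda>y. U f y + U g y)"
    and scale: "\<forall>f\<in>ell2 V1. \<forall>c. U (\<lambda>x. c * f x) = (\<lambda>y. c * U f y)"
    and norm: "\<forall>f\<in>ell2 V1. ell2_normsq V2 (U f) = ell2_normsq V1 f"
    and shift: "\<forall>f\<in>ell2 V1. U (S1 f) = S2 (U f)"
    using assms(1) unfolding unitarily_equivalent_def by blast
  define W where "W = inv_into (ell2 V1) U"
  have W: "W f \<in> ell2 V1" "U (W f) = f" if "f \<in> ell2 V2" for f
    using that bij unfolding W_def bij_betw_def by (auto intro: inv_into_into simp: f_inv_into_f)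
  have WU: "W (U f) = f" if "f \<in> ell2 V1" for f
    using that bij unfolding W_def bij_betw_def by (simp add: inv_into_f_f)
  show ?thesis unfolding unitarily_equivalent_def
  proof (intro exI[of _ W] conjI ballI allI)
    show "bij_betw W (ell2 V2) (ell2 V1)"
      unfolding W_def by (rule bij_betw_inv_into[OF bij])
  next
    fix f g assume f: "f \<in> ell2 V2" and g: "g \<in> ell2 V2"
    have "U (\<lambda>y. W f y + W g y) = (\<lambda>x. f x + g x)"
      using add W f g by simp
    then show "W (\<lambda>x. f x + g x) = (\<lambda>y. W f y + W g y)"
      using WU[OF ell2_add[OF W(1)[OF f] W(1)[OF g]]] by simp
  next
    fix f c assume f: "f \<in> ell2 V2"
    have "U (\<lambda>y. c * W f y) = (\<lambda>x. c * f x)"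
      using scale W f by simp
    then show "W (\<lambda>x. c * f x) = (\<lambda>y. c * W f y)"
      using WU[OF ell2_scale[OF W(1)[OF f], of c]] by simp
  next
    fix f assume "f \<in> ell2 V2"
    then show "ell2_normsq V1 (W f) = ell2_normsq V2 f"
      using norm W by force
  next
    fix f assume f: "f \<in> ell2 V2"
    have "U (S1 (W f)) = S2 f"
      using shift W f by simp
    then show "W (S2 f) = S1 (W f)"
      using WU[OF S1[OF W(1)[OF f]]] by simp
  qed
qed

lemma unitarily_equivalent_trans:
  assumes "unitarily_equivalent V1 S1 V2 S2" "unitarily_equivalent V2 S2 V3 S3"
  shows "unitarily_equivalent V1 S1 V3 S3"
proof -
  obtain U where bij: "bij_betw U (ell2 V1) (ell2 V2)"
    and "\<forall>f\<in>ell2 V1. \<forall>g\<in>ell2 V1. U (\<lambda>x. f x + g x) = (\<lambda>y. U f y + U g y)"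
    and "\<forall>f\<in>ell2 V1. \<forall>c. U (\<lambda>x. c * f x) = (\<lambda>y. c * U f y)"
    and "\<forall>f\<in>ell2 V1. ell2_normsq V2 (U f) = ell2_normsq V1 f"
    and "\<forall>f\<in>ell2 V1. U (S1 f) = S2 (U f)"
    using assms(1) unfolding unitarily_equivalent_def by blast
  moreover obtain U' where "bij_betw U' (ell2 V2) (ell2 V3)"
    and "\<forall>f\<in>ell2 V2. \<forall>g\<in>ell2 V2. U' (\<lambda>x. f x + g x) = (\<lambda>y. U' f y + U' g y)"
    and "\<forall>f\<in>ell2 V2. \<forall>c. U' (\<lambda>x. c * f x) = (\<lambda>y. c * U' f y)"
    and "\<forall>f\<in>ell2 V2. ell2_normsq V3 (U' f) = ell2_normsq V2 f"
    and "\<forall>f\<in>ell2 V2. U' (S2 f) = S3 (U' f)"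
    using assms(2) unfolding unitarily_equivalent_def by blast
  moreover have "U f \<in> ell2 V2" if "f \<in> ell2 V1" for f
    using bij that by (rule bij_betw_apply)
  ultimately show ?thesis unfolding unitarily_equivalent_def
    by (intro exI[of _ "U' \<circ> U"]) (auto intro: bij_betw_trans)
qed

lemma unitarily_equivalent_iff_models:
  assumes "unitarily_equivalent V1 S1 W1 T1" "unitarily_equivalent V2 S2 W2 T2"
    and "\<And>f. f \<in> ell2 V1 \<Longrightarrow> S1 f \<in> ell2 V1" "\<And>f. f \<in> ell2 V2 \<Longrightarrow> S2 f \<in> ell2 V2"
  shows "unitarily_equivalent V1 S1 V2 S2 \<longleftrightarrow> unitarily_equivalent W1 T1 W2 T2"
proof -
  have "unitarily_equivalent W1 T1 V1 S1" "unitarily_equivalent W2 T2 V2 S2"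
    using assms by (auto intro: unitarily_equivalent_sym)
  then show ?thesis
    using assms(1,2) by (blast intro: unitarily_equivalent_trans)
qed

definition root_unity :: "nat \<Rightarrow> complex" where
  "root_unity k = cis (2 * pi / real k)"

lemma root_unity_power: "root_unity k ^ n = cis (real n * (2 * pi / real k))"
  unfolding root_unity_def by (rule Complex.DeMoivre)

lemma root_unity_orthogonal:
  assumes k: "k > 0" and s: "s < k" and t: "t < k"
  shows "(\<Sum>i<k. root_unity k ^ (i * s) * cnj (root_unity k ^ (i * t))) =
         (if s = t then of_nat k else 0)"
proof -
  define z where "z = cis (2 * pi * (real s - real t) / real k)"
  have "root_unity k ^ (i * s) * cnj (root_unity k ^ (i * t)) = z ^ i" for i
    unfolding z_def root_unity_power cis_cnj cis_mult Complex.DeMoivre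
    by (rule arg_cong[where f=cis]) (simp add: algebra_simps diff_divide_distrib)
  then have sum_eq: "(\<Sum>i<k. root_unity k ^ (i * s) * cnj (root_unity k ^ (i * t))) = (\<Sum>i<k. z ^ i)"
    by simp
  show ?thesis
  proof (cases "s = t")
    case True
    then have "z = 1" by (simp add: z_def)
    then show ?thesis unfolding sum_eq using True by simp
  next
    case False
    have "z ^ k = cis (2 * pi * (real s - real t))"
      unfolding z_def Complex.DeMoivre using k by simp
    also have "\<dots> = 1"
      by (rule cis_multiple_2pi) (intro Ints_diff Ints_of_nat)
    finally have zk: "z ^ k = 1" .
    have "z \<noteq> 1"
    proof
      assume "z = 1"
      then have "cos (2 * pi * (real s - real t) / real k) = 1"
        unfolding z_def by (simp add: complex_eq_iff)
      then obtain m :: int where "2 * pi * (real s - real t) / real k = real_of_int m * 2 * pi"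
        using cos_one_2pi_int by blast
      then have "real_of_int (int s - int t) = real_of_int (m * int k)"
        using k by (simp add: divide_eq_eq)
      then have eq: "int s - int t = m * int k" by (simp only: of_int_eq_iff)
      have "\<bar>int s - int t\<bar> < int k" using s t by auto
      then have "\<bar>m\<bar> * int k < 1 * int k" using eq by (simp add: abs_mult)
      then have "\<bar>m\<bar> < 1" by (rule mult_right_less_imp_less) simp
      then have "m = 0" by simp
      then show False using eq False by simp
    qed
    then have "(\<Sum>i<k. z ^ i) = 0" by (simp add: geometric_sum zk)
    then show ?thesis unfolding sum_eq using False by simp
  qed
qed

definition dft :: "nat \<Rightarrow> (nat \<Rightarrow> complex) \<Rightarrow> nat \<Rightarrow> complex" where
  "dft k x t = of_real (1 / sqrt (real k)) * (\<Sum>i<k. x i * cnj (root_unity k ^ (i * t)))"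

definition idft :: "nat \<Rightarrow> (nat \<Rightarrow> complex) \<Rightarrow> nat \<Rightarrow> complex" where
  "idft k a i = of_real (1 / sqrt (real k)) * (\<Sum>t<k. a t * root_unity k ^ (i * t))"

lemma of_real_inverse_sqrt_square:
  "k > 0 \<Longrightarrow> of_real (1 / sqrt (real k)) * of_real (1 / sqrt (real k)) * of_nat k = (1::complex)"
  by (simp flip: of_real_mult add: real_sqrt_mult_self)

lemma dft_idft:
  assumes k: "k > 0" and t: "t < k"
  shows "dft k (idft k a) t = a t"
proof -
  let ?c = "of_real (1 / sqrt (real k))"
  have "dft k (idft k a) t = ?c * (\<Sum>i<k. (?c * (\<Sum>s<k. a s * root_unity k ^ (i * s))) * cnj (root_unity k ^ (i * t)))"
    by (simp add: dft_def idft_def)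
  also have "\<dots> = ?c * ?c * (\<Sum>i<k. \<Sum>s<k. a s * (root_unity k ^ (i * s) * cnj (root_unity k ^ (i * t))))"
    by (simp add: sum_distrib_left sum_distrib_right mult.assoc)
  also have "\<dots> = ?c * ?c * (\<Sum>s<k. \<Sum>i<k. a s * (root_unity k ^ (i * s) * cnj (root_unity k ^ (i * t))))"
    by (subst sum.swap) (rule refl)
  also have "\<dots> = ?c * ?c * (\<Sum>s<k. a s * (\<Sum>i<k. root_unity k ^ (i * s) * cnj (root_unity k ^ (i * t))))"
    by (simp add: sum_distrib_left)
  also have "\<dots> = ?c * ?c * (\<Sum>s<k. a s * (if s = t then of_nat k else 0))"
    using root_unity_orthogonal[OF k _ t] by simp
  also have "\<dots> = ?c * ?c * of_nat k * a t"
    using t by (simp add: if_distrib[of "\<lambda>x. _ * x"] sum.delta mult_ac cong: if_cong)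
  also have "\<dots> = a t" using of_real_inverse_sqrt_square[OF k] by simp
  finally show ?thesis .
qed

lemma sum_swap3:
  "(\<Sum>t\<in>A. \<Sum>j\<in>B. \<Sum>i\<in>C. f t j i) = (\<Sum>j\<in>B. \<Sum>i\<in>C. \<Sum>t\<in>A. f t j i)"
proof -
  have "(\<Sum>t\<in>A. \<Sum>j\<in>B. \<Sum>i\<in>C. f t j i) = (\<Sum>j\<in>B. \<Sum>t\<in>A. \<Sum>i\<in>C. f t j i)"
    by (rule sum.swap)
  also have "\<dots> = (\<Sum>j\<in>B. \<Sum>i\<in>C. \<Sum>t\<in>A. f t j i)"
    by (rule sum.cong[OF refl], rule sum.swap)
  finally show ?thesis .
qed

lemma dft_parseval:
  assumes k: "k > 0"
  shows "(\<Sum>t<k. (cmod (dft k x t))\<^sup>2) = (\<Sum>i<k. (cmod (x i))\<^sup>2)"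
proof -
  let ?c = "of_real (1 / sqrt (real k))"
  have "of_real (\<Sum>t<k. (cmod (dft k x t))\<^sup>2) = (\<Sum>t<k. dft k x t * cnj (dft k x t))"
    by (simp only: of_real_sum complex_norm_square)
  also have "\<dots> = (\<Sum>t<k. ?c * ?c * (\<Sum>j<k. \<Sum>i<k. x i * cnj (x j) * (root_unity k ^ (t * j) * cnj (root_unity k ^ (t * i)))))"
    by (simp add: dft_def sum_distrib_left sum_distrib_right mult_ac sum_product cnj_sum)
  also have "\<dots> = ?c * ?c * (\<Sum>t<k. \<Sum>j<k. \<Sum>i<k. x i * cnj (x j) * (root_unity k ^ (t * j) * cnj (root_unity k ^ (t * i))))"
    by (simp only: sum_distrib_left)
  also have "\<dots> = ?c * ?c * (\<Sum>j<k. \<Sum>i<k. \<Sum>t<k. x i * cnj (x j) * (root_unity k ^ (t * j) * cnj (root_unity k ^ (t * i))))"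
    by (rule arg_cong[where f="\<lambda>z. ?c * ?c * z"], rule sum_swap3)
  also have "\<dots> = ?c * ?c * (\<Sum>j<k. \<Sum>i<k. x i * cnj (x j) * (\<Sum>t<k. root_unity k ^ (t * j) * cnj (root_unity k ^ (t * i))))"
    by (simp only: sum_distrib_left)
  also have "\<dots> = ?c * ?c * (\<Sum>j<k. \<Sum>i<k. x i * cnj (x j) * (if j = i then of_nat k else 0))"
    using root_unity_orthogonal[OF k] by simp
  also have "\<dots> = ?c * ?c * of_nat k * (\<Sum>j<k. x j * cnj (x j))"
    by (simp add: if_distrib[of "\<lambda>y. _ * y"] sum.delta sum_distrib_left sum_divide_distrib mult_ac cong: if_cong)
  also have "\<dots> = (\<Sum>i<k. x i * cnj (x i))" using of_real_inverse_sqrt_square[OF k] by simp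
  also have "\<dots> = of_real (\<Sum>i<k. (cmod (x i))\<^sup>2)"
    by (simp only: of_real_sum complex_norm_square)
  finally show ?thesis by (simp only: of_real_eq_iff)
qed

lemma dft_cong: "(\<And>i. i < k \<Longrightarrow> x i = y i) \<Longrightarrow> dft k x t = dft k y t"
  unfolding dft_def by simp

lemma dft_linear: "dft k (\<lambda>i. a * x i + b * y i) t = a * dft k x t + b * dft k y t"
  unfolding dft_def by (simp add: sum.distrib sum_distrib_left algebra_simps)

lemma dft_const:
  assumes "0 < t" "t < k"
  shows "dft k (\<lambda>i. C) t = 0"
proof -
  have "(\<Sum>i<k. root_unity k ^ (i * 0) * cnj (root_unity k ^ (i * t))) = 0"
    using root_unity_orthogonal[of k 0 t] assms by simp
  then show ?thesis unfolding dft_def by (simp flip: sum_distrib_left)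
qed

lemma homogeneous_system_nontrivial_solution:
  fixes y :: "'i \<Rightarrow> 'b \<Rightarrow> 'c::field"
  assumes "finite B" "finite I" "card B < card I"
  shows "\<exists>a. (\<exists>i\<in>I. a i \<noteq> 0) \<and> (\<forall>b\<in>B. (\<Sum>i\<in>I. a i * y i b) = 0)"
  using assms
proof (induction B arbitrary: I y rule: finite_induct)
  case empty
  then obtain i where "i \<in> I" by (metis card.empty ex_in_conv less_irrefl)
  then show ?case by (intro exI[of _ "\<lambda>_. 1"]) auto
next
  case (insert b0 B)
  show ?case
  proof (cases "\<forall>i\<in>I. y i b0 = 0")
    case True
    obtain a where "\<exists>i\<in>I. a i \<noteq> 0" "\<forall>b\<in>B. (\<Sum>i\<in>I. a i * y i b) = 0"
      using insert.IH[of I y] insert.prems insert.hyps by auto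
    then show ?thesis using True by auto
  next
    case False
    then obtain p where p: "p \<in> I" "y p b0 \<noteq> 0" by blast
    \<comment> \<open>Eliminate the unknown \<open>p\<close> using the equation for \<open>b0\<close>, and solve the remaining system.\<close>
    define I' where "I' = I - {p}"
    define y' where "y' i b = y i b - (y i b0 / y p b0) * y p b" for i b
    have "finite I'" "card B < card I'" using insert p by (simp_all add: I'_def)
    then obtain a' where a': "\<exists>i\<in>I'. a' i \<noteq> 0" "\<forall>b\<in>B. (\<Sum>i\<in>I'. a' i * y' i b) = 0"
      using insert.IH by blast
    define a where "a i = (if i = p then - (\<Sum>i\<in>I'. a' i * y i b0) / y p b0 else a' i)" for i
    have reduce: "(\<Sum>i\<in>I. a i * y i b) = (\<Sum>i\<in>I'. a' i * y' i b)" for b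
    proof -
      have "(\<Sum>i\<in>I. a i * y i b) = a p * y p b + (\<Sum>i\<in>I'. a' i * y i b)"
        unfolding I'_def using p insert.prems(1) by (simp add: sum.remove a_def)
      moreover have "(\<Sum>i\<in>I'. a' i * y' i b) =
          (\<Sum>i\<in>I'. a' i * y i b) - (\<Sum>i\<in>I'. a' i * y i b0) / y p b0 * y p b"
        unfolding y'_def
        by (simp add: algebra_simps sum_subtractf sum_distrib_left sum_distrib_right sum_divide_distrib)
      ultimately show ?thesis by (simp add: a_def)
    qed
    have "y' i b0 = 0" for i
      unfolding y'_def using p by simp
    then have "\<forall>b\<in>insert b0 B. (\<Sum>i\<in>I. a i * y i b) = 0"
      using a'(2) by (simp add: reduce)
    moreover have "\<exists>i\<in>I. a i \<noteq> 0"
      using a'(1) by (auto simp: a_def I'_def)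
    ultimately show ?thesis by blast
  qed
qed

definition unilateral_shift :: "('x \<times> nat \<Rightarrow> complex) \<Rightarrow> 'x \<times> nat \<Rightarrow> complex" where
  "unilateral_shift c p = (if snd p = 0 then 0 else c (fst p, snd p - 1))"

lemma ell2_ennormsq_unilateral_shift:
  "ell2_ennormsq (A \<times> UNIV) (unilateral_shift c) = ell2_ennormsq (A \<times> UNIV) c"
proof -
  let ?h = "\<lambda>p :: 'x \<times> nat. (fst p, Suc (snd p))"
  have "ell2_ennormsq (A \<times> UNIV) (unilateral_shift c) =
      (\<Sum>\<^sub>\<infinity>p\<in>?h ` (A \<times> UNIV). ennreal ((cmod (unilateral_shift c p))\<^sup>2))"
    unfolding ell2_ennormsq_def
  proof (rule infsum_cong_neutral)
    fix p assume p: "p \<in> A \<times> UNIV - ?h ` (A \<times> UNIV)"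
    have "snd p = 0"
    proof (rule ccontr)
      assume "snd p \<noteq> 0"
      then have "p = ?h (fst p, snd p - 1)" by simp
      moreover have "(fst p, snd p - 1) \<in> A \<times> UNIV" using p by auto
      ultimately have "p \<in> ?h ` (A \<times> UNIV)" by (rule rev_image_eqI[rotated])
      then show False using p by blast
    qed
    then show "ennreal ((cmod (unilateral_shift c p))\<^sup>2) = 0"
      by (simp add: unilateral_shift_def)
  qed auto
  also have "\<dots> = ell2_ennormsq (A \<times> UNIV) c"
    unfolding ell2_ennormsq_def
    by (subst infsum_reindex) (auto simp: inj_on_def comp_def unilateral_shift_def)
  finally show ?thesis .
qed

lemma unilateral_shift_ell2: "c \<in> ell2 (A \<times> UNIV) \<Longrightarrow> unilateral_shift c \<in> ell2 (A \<times> UNIV)"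
  by (auto simp: ell2_iff ell2_ennormsq_unilateral_shift unilateral_shift_def)

lemma range_unilateral_shift:
  assumes "c \<in> ell2 (A \<times> UNIV)" "\<And>x. c (x, 0) = 0"
  shows "\<exists>g\<in>ell2 (A \<times> UNIV). unilateral_shift g = c"
proof
  define g where "g = (\<lambda>q. c (fst q, Suc (snd q)))"
  show shift_g: "unilateral_shift g = c"
    by (rule ext) (auto simp: unilateral_shift_def g_def assms(2) split: prod.split nat.split)
  have "ell2_ennormsq (A \<times> UNIV) g = ell2_ennormsq (A \<times> UNIV) c"
    using ell2_ennormsq_unilateral_shift[of A g] by (simp add: shift_g)
  then show "g \<in> ell2 (A \<times> UNIV)"
    using assms(1) by (auto simp: ell2_iff g_def)
qed

definition relabel :: "'y set \<Rightarrow> ('y \<Rightarrow> 'x) \<Rightarrow> ('x \<times> nat \<Rightarrow> complex) \<Rightarrow> 'y \<times> nat \<Rightarrow> complex" where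
  "relabel B \<rho> c p = (if fst p \<in> B then c (\<rho> (fst p), snd p) else 0)"

lemma ell2_ennormsq_relabel:
  assumes "bij_betw \<rho> B A"
  shows "ell2_ennormsq (B \<times> UNIV) (relabel B \<rho> c) = ell2_ennormsq (A \<times> UNIV) c"
proof -
  let ?g = "\<lambda>q. (\<rho> (fst q), snd q)"
  have "bij_betw ?g (B \<times> UNIV) (A \<times> UNIV)"
    using assms unfolding bij_betw_def inj_on_def by (auto simp: image_iff)
  then show ?thesis
    unfolding ell2_ennormsq_def relabel_def
    by (subst infsum_reindex_bij_betw[symmetric]) (auto intro: infsum_cong)
qed

lemma relabel_ell2:
  "bij_betw \<rho> B A \<Longrightarrow> c \<in> ell2 (A \<times> UNIV) \<Longrightarrow> relabel B \<rho> c \<in> ell2 (B \<times> UNIV)"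
  by (auto simp: ell2_iff ell2_ennormsq_relabel relabel_def)

lemma relabel_inverse:
  assumes "\<And>x. x \<in> A \<Longrightarrow> \<rho> (\<sigma> x) = x" "\<And>x. x \<in> A \<Longrightarrow> \<sigma> x \<in> B" "c \<in> ell2 (A \<times> UNIV)"
  shows "relabel A \<sigma> (relabel B \<rho> c) = c"
  using assms by (auto simp: relabel_def ell2_vanishes)

lemma unitarily_equivalent_unilateral_shift_bij:
  assumes \<sigma>: "bij_betw \<sigma> A B"
  shows "unitarily_equivalent (A \<times> UNIV) unilateral_shift (B \<times> UNIV) unilateral_shift"
proof -
  define \<rho> where "\<rho> = inv_into A \<sigma>"
  have \<rho>: "bij_betw \<rho> B A"
    unfolding \<rho>_def by (rule bij_betw_inv_into[OF \<sigma>])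
  have "bij_betw (relabel B \<rho>) (ell2 (A \<times> UNIV)) (ell2 (B \<times> UNIV))"
  proof (rule bij_betwI[where g = "relabel A \<sigma>"])
    show "relabel B \<rho> \<in> ell2 (A \<times> UNIV) \<rightarrow> ell2 (B \<times> UNIV)"
      using relabel_ell2[OF \<rho>] by blast
    show "relabel A \<sigma> \<in> ell2 (B \<times> UNIV) \<rightarrow> ell2 (A \<times> UNIV)"
      using relabel_ell2[OF \<sigma>] by blast
    show "relabel A \<sigma> (relabel B \<rho> c) = c" if "c \<in> ell2 (A \<times> UNIV)" for c
      by (rule relabel_inverse[OF _ _ that])
        (use \<sigma> in \<open>auto simp: \<rho>_def bij_betw_def inv_into_f_f\<close>)
    show "relabel B \<rho> (relabel A \<sigma> d) = d" if "d \<in> ell2 (B \<times> UNIV)" for d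
      by (rule relabel_inverse[OF _ _ that])
        (use \<sigma> in \<open>auto simp: \<rho>_def bij_betw_def f_inv_into_f inv_into_into\<close>)
  qed
  moreover have "relabel B \<rho> c \<in> ell2 (B \<times> UNIV)" if "c \<in> ell2 (A \<times> UNIV)" for c
    using relabel_ell2[OF \<rho> that] .
  ultimately show ?thesis
    unfolding unitarily_equivalent_def
  proof (intro exI[of _ "relabel B \<rho>"] conjI ballI allI)
    fix c assume "c \<in> ell2 (A \<times> (UNIV :: nat set))"
    then show "ell2_normsq (B \<times> UNIV) (relabel B \<rho> c) = ell2_normsq (A \<times> UNIV) c"
      by (intro ell2_normsq_eqI relabel_ell2[OF \<rho>]) (simp_all add: ell2_ennormsq_relabel[OF \<rho>])
  qed (simp_all add: relabel_def unilateral_shift_def fun_eq_iff)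
qed

lemma unitarily_equivalent_unilateral_shift_card_le:
  fixes A :: "'a set" and B :: "'b set"
  assumes "unitarily_equivalent (A \<times> UNIV) unilateral_shift (B \<times> UNIV) unilateral_shift"
    and "finite B"
  shows "finite A \<and> card A \<le> card B"
proof -
  obtain U where bij: "bij_betw U (ell2 (A \<times> UNIV)) (ell2 (B \<times> UNIV))"
    and add: "\<forall>f\<in>ell2 (A \<times> UNIV). \<forall>g\<in>ell2 (A \<times> UNIV). U (\<lambda>x. f x + g x) = (\<lambda>y. U f y + U g y)"
    and scale: "\<forall>f\<in>ell2 (A \<times> UNIV). \<forall>c. U (\<lambda>x. c * f x) = (\<lambda>y. c * U f y)"
    and shift: "\<forall>f\<in>ell2 (A \<times> UNIV). U (unilateral_shift f) = unilateral_shift (U f)"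
    using assms(1) unfolding unitarily_equivalent_def by blast
  have U_ell2: "U f \<in> ell2 (B \<times> UNIV)" if "f \<in> ell2 (A \<times> UNIV)" for f
    using bij_betw_apply[OF bij that] .
  \<comment> \<open>The vectors \<open>e j\<close> span a complement of the range of the shift; more than \<open>card B\<close> of them
    must have a nonzero combination that \<open>U\<close> maps into the range of the shift.\<close>
  have no_large_subset: False if F: "F \<subseteq> A" "finite F" "card B < card F" for F
  proof -
    define e where "e j = (\<lambda>p. if p = (j, 0::nat) then 1 else 0 :: complex)" for j :: 'a
    have e: "e j \<in> ell2 (A \<times> UNIV)" if "j \<in> A" for j
      unfolding e_def using that by (intro ell2_indicator) simp
    obtain a where a: "\<exists>j\<in>F. a j \<noteq> 0" "\<forall>i\<in>B. (\<Sum>j\<in>F. a j * U (e j) (i, 0)) = 0"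
      using homogeneous_system_nontrivial_solution[OF assms(2) F(2,3), of "\<lambda>j i. U (e j) (i, 0)"]
      by blast
    define h where "h = (\<lambda>p. \<Sum>j\<in>F. a j * e j p)"
    have h: "h \<in> ell2 (A \<times> UNIV)"
      unfolding h_def using F e by (intro ell2_lincomb) auto
    have "U h = (\<lambda>q. \<Sum>j\<in>F. a j * U (e j) q)"
      unfolding h_def using F e by (intro ell2_map_lincomb[OF add scale]) auto
    then have Uh0: "U h (i, 0) = 0" for i
      using a(2) ell2_vanishes[OF U_ell2[OF h], of "(i, 0)"] by (cases "i \<in> B") auto
    then obtain g where "g \<in> ell2 (B \<times> UNIV)" and shift_g: "unilateral_shift g = U h"
      using range_unilateral_shift[OF U_ell2[OF h]] by blast
    then have "g \<in> U ` ell2 (A \<times> UNIV)"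
      using bij by (simp add: bij_betw_def)
    then obtain g' where g': "g' \<in> ell2 (A \<times> UNIV)" "g = U g'" ..
    have "U (unilateral_shift g') = U h"
      using shift g' shift_g by simp
    then have h_shift: "unilateral_shift g' = h"
      using bij unilateral_shift_ell2[OF g'(1)] h unfolding bij_betw_def by (blast dest: inj_onD)
    obtain j0 where j0: "j0 \<in> F" "a j0 \<noteq> 0" using a(1) by blast
    have "h (j0, 0) = (\<Sum>j\<in>F. if j0 = j then a j else 0)"
      unfolding h_def e_def by (intro sum.cong) auto
    then have "h (j0, 0) = a j0"
      using j0(1) F(2) by simp
    moreover have "h (j0, 0) = 0"
      by (simp add: h_shift[symmetric] unilateral_shift_def)
    ultimately show False using j0(2) by simp
  qed
  show ?thesis
  proof (cases "finite A")
    case False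
    then obtain F where "F \<subseteq> A" "finite F" "card F = Suc (card B)"
      using infinite_arbitrarily_large by blast
    then show ?thesis using no_large_subset by (metis lessI)
  next
    case True
    then show ?thesis using no_large_subset[of A] by fastforce
  qed
qed

lemma unitarily_equivalent_unilateral_shift_iff:
  assumes "countable A" "countable B"
  shows "unitarily_equivalent (A \<times> UNIV) unilateral_shift (B \<times> UNIV) unilateral_shift
    \<longleftrightarrow> ecard A = ecard B"
proof
  assume equiv: "unitarily_equivalent (A \<times> UNIV) unilateral_shift (B \<times> UNIV) unilateral_shift"
  moreover have "unitarily_equivalent (B \<times> UNIV) unilateral_shift (A \<times> UNIV) unilateral_shift"
    using equiv unilateral_shift_ell2 by (rule unitarily_equivalent_sym)
  ultimately have "finite B \<Longrightarrow> finite A \<and> card A \<le> card B" "finite A \<Longrightarrow> finite B \<and> card B \<le> card A"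
    by (simp_all add: unitarily_equivalent_unilateral_shift_card_le)
  then show "ecard A = ecard B"
    by (cases "finite A") (auto simp: ecard_def intro: le_antisym)
next
  assume "ecard A = ecard B"
  then obtain \<sigma> where "bij_betw \<sigma> A B"
    using assms countable_ecard_eq_imp_bij by blast
  then show "unitarily_equivalent (A \<times> UNIV) unilateral_shift (B \<times> UNIV) unilateral_shift"
    by (rule unitarily_equivalent_unilateral_shift_bij)
qed

locale leafless_tree =
  fixes V :: "'a set" and E :: "('a \<times> 'a) set" and r :: 'a
  assumes rooted_tree: "rooted_directed_tree V E r"
    and no_leaves: "leafless V E" and finite_branching: "locally_finite V E"
begin

lemma edges_subset: "E \<subseteq> V \<times> V"
  and connected: "u \<in> V \<Longrightarrow> v \<in> V \<Longrightarrow> (u, v) \<in> (E \<union> E\<inverse>)\<^sup>*"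
  and parent_unique: "(u, v) \<in> E \<Longrightarrow> (w, v) \<in> E \<Longrightarrow> u = w"
  and root_in: "r \<in> V"
  and no_parent_root: "(u, r) \<notin> E"
  using rooted_tree unfolding rooted_directed_tree_def directed_tree_def is_root_def
  by (elim conjE; blast)+

lemma mem_Chi_iff: "u \<in> Chi E v \<longleftrightarrow> (v, u) \<in> E"
  unfolding Chi_def by simp

lemma Chi_subset: "Chi E v \<subseteq> V"
  using edges_subset unfolding Chi_def by blast

lemma Chi_outside: "v \<notin> V \<Longrightarrow> Chi E v = {}"
  using edges_subset unfolding Chi_def by blast

lemma finite_Chi: "finite (Chi E v)"
  using finite_branching Chi_outside unfolding locally_finite_def by (cases "v \<in> V") auto

lemma Chi_disjoint: "v \<noteq> v' \<Longrightarrow> Chi E v \<inter> Chi E v' = {}"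
  unfolding Chi_def using parent_unique by blast

lemma parent_Chi: "u \<in> Chi E v \<Longrightarrow> parent E u = v"
  unfolding parent_def Chi_def using parent_unique by blast

lemma Chi_not_root: "u \<in> Chi E v \<Longrightarrow> u \<noteq> r"
  using no_parent_root mem_Chi_iff by blast

definition outdeg :: "'a \<Rightarrow> nat" where
  "outdeg v = card (Chi E v)"

lemma outdeg_pos: "v \<in> V \<Longrightarrow> outdeg v > 0"
  using finite_Chi no_leaves unfolding outdeg_def leafless_def by (simp add: card_gt_0_iff)

definition level :: "nat \<Rightarrow> 'a set" where
  "level n = (Chi_set E ^^ n) {r}"

lemma level_0: "level 0 = {r}"
  unfolding level_def by simp

lemma level_Suc: "level (Suc n) = (\<Union>v\<in>level n. Chi E v)"
  unfolding level_def by (simp add: Chi_set_def)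

lemma level_iff_relpow: "x \<in> level n \<longleftrightarrow> (r, x) \<in> E ^^ n"
proof (induction n arbitrary: x)
  case 0
  then show ?case by (auto simp: level_0)
next
  case (Suc n)
  have "x \<in> level (Suc n) \<longleftrightarrow> (\<exists>v. v \<in> level n \<and> (v, x) \<in> E)"
    unfolding level_Suc by (auto simp: mem_Chi_iff)
  also have "\<dots> \<longleftrightarrow> (\<exists>v. (r, v) \<in> E ^^ n \<and> (v, x) \<in> E)"
    using Suc.IH by blast
  also have "\<dots> \<longleftrightarrow> (r, x) \<in> E ^^ Suc n"
    by (blast intro: relpow_Suc_I elim: relpow_Suc_E)
  finally show ?case .
qed

lemma level_subset: "level n \<subseteq> V"
  using root_in Chi_subset by (cases n) (auto simp: level_0 level_Suc)

lemma finite_level: "finite (level n)"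
  by (induction n) (auto simp: level_0 level_Suc finite_Chi)

lemma Chi_level: "v \<in> level n \<Longrightarrow> Chi E v \<subseteq> level (Suc n)"
  by (auto simp: level_Suc)

text \<open>Parents are unique, so two paths from the root ending at the same vertex can be
  shortened simultaneously from their ends.\<close>

lemma relpow_from_root_cancel:
  assumes "(r, x) \<in> E ^^ n" "(r, x) \<in> E ^^ m" "n \<le> m"
  shows "(r, r) \<in> E ^^ (m - n)"
  using assms
proof (induction n arbitrary: x m)
  case 0
  then show ?case by simp
next
  case (Suc n)
  from Suc.prems(1) obtain y where y: "(r, y) \<in> E ^^ n" "(y, x) \<in> E"
    by (rule relpow_Suc_E)
  from Suc.prems(3) obtain m' where m: "m = Suc m'" by (cases m) auto
  from Suc.prems(2) obtain y' where y': "(r, y') \<in> E ^^ m'" "(y', x) \<in> E"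
    unfolding m by (rule relpow_Suc_E)
  have "y = y'" using parent_unique y(2) y'(2) by blast
  then have "(r, r) \<in> E ^^ (m' - n)"
    using Suc.IH[OF y(1)] y'(1) Suc.prems(3) m by simp
  then show ?case using m by simp
qed

lemma level_unique: "x \<in> level n \<Longrightarrow> x \<in> level m \<Longrightarrow> n = m"
proof -
  have "n = m" if "x \<in> level n" "x \<in> level m" "n \<le> m" for n m
  proof (rule ccontr)
    assume "n \<noteq> m"
    then have "(r, r) \<in> E ^^ Suc (m - n - 1)"
      using relpow_from_root_cancel that by (simp add: level_iff_relpow Suc_diff_Suc)
    then obtain y where "(y, r) \<in> E" by (rule relpow_Suc_E)
    then show False using no_parent_root by blast
  qed
  then show "x \<in> level n \<Longrightarrow> x \<in> level m \<Longrightarrow> n = m"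
    using nat_le_linear[of n m] by blast
qed

lemma rtrancl_from_root: "(r, x) \<in> (E \<union> E\<inverse>)\<^sup>* \<Longrightarrow> (r, x) \<in> E\<^sup>*"
proof (induction rule: rtrancl_induct)
  case base
  then show ?case by simp
next
  case (step y z)
  show ?case
  proof (cases "(y, z) \<in> E")
    case True
    then show ?thesis by (rule rtrancl_into_rtrancl[OF step.IH])
  next
    case False
    then have zy: "(z, y) \<in> E" using step.hyps(2) by blast
    then have "y \<noteq> r" using no_parent_root by blast
    with step.IH obtain w where "(r, w) \<in> E\<^sup>*" "(w, y) \<in> E"
      by (cases rule: rtranclE) auto
    then show ?thesis using parent_unique zy by blast
  qed
qed

lemma in_level_depth: "x \<in> V \<Longrightarrow> x \<in> level (depth E r x)"
proof -
  assume "x \<in> V"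
  then have "(r, x) \<in> E\<^sup>*" using rtrancl_from_root connected root_in by blast
  then obtain n where "x \<in> level n" using rtrancl_power level_iff_relpow by blast
  then have "(THE n. x \<in> level n) = n"
    using level_unique by blast
  then show ?thesis
    using \<open>x \<in> level n\<close> unfolding depth_def level_def by simp
qed

lemma depth_eq: "x \<in> level n \<Longrightarrow> depth E r x = n"
  using level_unique in_level_depth level_subset by blast

lemma level_iff: "x \<in> level n \<longleftrightarrow> x \<in> V \<and> depth E r x = n"
  using depth_eq in_level_depth level_subset by blast

definition weight :: "'a \<Rightarrow> real" where
  "weight v = 1 / sqrt (real (outdeg v))"

abbreviation S :: "('a \<Rightarrow> complex) \<Rightarrow> 'a \<Rightarrow> complex" where
  "S \<equiv> dirichlet_shift V E r 1"

lemma S_apply: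
  "S f u = (if u \<in> V \<and> u \<noteq> r then of_real (weight (parent E u)) * f (parent E u) else 0)"
proof -
  have "(real n + 1) / (real n + 1) = 1" for n :: nat
    by simp
  then show ?thesis
    unfolding dirichlet_shift_def weighted_shift_def dirichlet_weight_def weight_def outdeg_def Let_def
    by simp
qed

definition shift_adj :: "('a \<Rightarrow> complex) \<Rightarrow> 'a \<Rightarrow> complex" where
  "shift_adj f v = of_real (weight v) * (\<Sum>u\<in>Chi E v. f u)"

lemma shift_adj_power_Suc: "(shift_adj ^^ Suc m) f = (shift_adj ^^ m) (shift_adj f)"
  by (simp only: funpow.simps(2) comp_apply funpow_swap1)

lemma shift_adj_S:
  assumes "\<forall>x. x \<notin> V \<longrightarrow> f x = 0"
  shows "shift_adj (S f) = f"
proof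
  fix v
  show "shift_adj (S f) v = f v"
  proof (cases "v \<in> V")
    case True
    have "S f u = of_real (weight v) * f v" if "u \<in> Chi E v" for u
      using that Chi_subset Chi_not_root parent_Chi by (auto simp: S_apply)
    then have "shift_adj (S f) v = of_nat (outdeg v) * (of_real (weight v) * of_real (weight v)) * f v"
      unfolding shift_adj_def outdeg_def by (simp add: mult_ac)
    also have "\<dots> = f v"
      using of_real_inverse_sqrt_square[OF outdeg_pos[OF True]] by (simp add: weight_def mult_ac)
    finally show ?thesis .
  next
    case False
    then show ?thesis using assms Chi_outside by (simp add: shift_adj_def)
  qed
qed

definition child :: "'a \<Rightarrow> nat \<Rightarrow> 'a" where
  "child v = (SOME g. bij_betw g {..<outdeg v} (Chi E v))"

lemma child_bij: "bij_betw (child v) {..<outdeg v} (Chi E v)"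
proof -
  obtain h where "bij_betw h {0..<card (Chi E v)} (Chi E v)"
    using ex_bij_betw_nat_finite[OF finite_Chi] by blast
  then have "\<exists>g. bij_betw g {..<outdeg v} (Chi E v)"
    unfolding outdeg_def atLeast0LessThan by blast
  then show ?thesis
    unfolding child_def by (rule someI_ex)
qed

definition child_index :: "'a \<Rightarrow> 'a \<Rightarrow> nat" where
  "child_index v u = inv_into {..<outdeg v} (child v) u"

lemma child_index_child: "i < outdeg v \<Longrightarrow> child_index v (child v i) = i"
  unfolding child_index_def using child_bij by (simp add: bij_betw_def)

lemma child_in_Chi: "i < outdeg v \<Longrightarrow> child v i \<in> Chi E v"
  using child_bij by (auto simp: bij_betw_def)

lemma sum_Chi_child: "(\<Sum>u\<in>Chi E v. g u) = (\<Sum>i<outdeg v. g (child v i))"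
  using sum.reindex_bij_betw[OF child_bij, of g] by simp

definition fcoef :: "('a \<Rightarrow> complex) \<Rightarrow> 'a \<Rightarrow> nat \<Rightarrow> complex" where
  "fcoef f v t = dft (outdeg v) (\<lambda>i. f (child v i)) t"

lemma fcoef_0: "fcoef f v 0 = shift_adj f v"
  unfolding fcoef_def dft_def shift_adj_def weight_def sum_Chi_child by simp

lemma fcoef_linear: "fcoef (\<lambda>x. a * f x + b * g x) v t = a * fcoef f v t + b * fcoef g v t"
  unfolding fcoef_def by (rule dft_linear)

lemma fcoef_S:
  assumes "0 < t" "t < outdeg v"
  shows "fcoef (S f) v t = 0"
proof -
  have "S f (child v i) = of_real (weight v) * f v" if "i < outdeg v" for i
    using child_in_Chi[OF that] Chi_subset Chi_not_root parent_Chi by (auto simp: S_apply)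
  then have "fcoef (S f) v t = dft (outdeg v) (\<lambda>i. of_real (weight v) * f v) t"
    unfolding fcoef_def by (rule dft_cong)
  also have "\<dots> = 0" using assms by (rule dft_const)
  finally show ?thesis .
qed

lemma sum_Chi_parseval:
  assumes "v \<in> V"
  shows "(\<Sum>u\<in>Chi E v. (cmod (f u))\<^sup>2) =
    (cmod (shift_adj f v))\<^sup>2 + (\<Sum>t\<in>{0<..<outdeg v}. (cmod (fcoef f v t))\<^sup>2)"
proof -
  have pos: "outdeg v > 0" using outdeg_pos assms by simp
  have "(\<Sum>u\<in>Chi E v. (cmod (f u))\<^sup>2) = (\<Sum>t<outdeg v. (cmod (fcoef f v t))\<^sup>2)"
    unfolding sum_Chi_child fcoef_def by (rule dft_parseval[OF pos, symmetric])
  also have "{..<outdeg v} = insert 0 {0<..<outdeg v}"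
    using pos by auto
  finally show ?thesis by (simp add: fcoef_0)
qed

text \<open>\<open>J\<close> indexes an orthonormal basis \<open>w\<^sub>j\<close> of the kernel of the adjoint of \<open>S\<close>: \<open>(r, 0)\<close> stands
  for the unit vector at the root, \<open>(v, t)\<close> with \<open>0 < t\<close> for the \<open>t\<close>-th Fourier vector on the
  children of \<open>v\<close>, which lives on level \<open>jdepth (v, t) = depth v + 1\<close>.
  \<open>wcoef g j\<close> is the coefficient of \<open>g\<close> along \<open>w\<^sub>j\<close>, and \<open>wold f (j, n)\<close> the coefficient of \<open>f\<close>
  along \<open>S\<^sup>n w\<^sub>j\<close>.\<close>

definition J :: "('a \<times> nat) set" where
  "J = insert (r, 0) (SIGMA v:V. {0<..<outdeg v})"

definition jdepth :: "'a \<times> nat \<Rightarrow> nat" where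
  "jdepth j = (if snd j = 0 then 0 else Suc (depth E r (fst j)))"

definition wcoef :: "('a \<Rightarrow> complex) \<Rightarrow> 'a \<times> nat \<Rightarrow> complex" where
  "wcoef g j = (if snd j = 0 then g (fst j) else fcoef g (fst j) (snd j))"

definition wold :: "('a \<Rightarrow> complex) \<Rightarrow> ('a \<times> nat) \<times> nat \<Rightarrow> complex" where
  "wold f p = (if fst p \<in> J then wcoef ((shift_adj ^^ snd p) f) (fst p) else 0)"

definition J_upto :: "nat \<Rightarrow> ('a \<times> nat) set" where
  "J_upto N = {j \<in> J. jdepth j \<le> N}"

definition J_at :: "nat \<Rightarrow> ('a \<times> nat) set" where
  "J_at N = (SIGMA v:level N. {0<..<outdeg v})"

lemma J_upto_0: "J_upto 0 = {(r, 0)}"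
  unfolding J_upto_def J_def jdepth_def by auto

lemma jdepth_J_at: "j \<in> J_at N \<Longrightarrow> jdepth j = Suc N"
  unfolding J_at_def jdepth_def using depth_eq by auto

lemma J_upto_Suc: "J_upto (Suc N) = J_upto N \<union> J_at N"
  unfolding J_upto_def J_at_def J_def jdepth_def using level_iff by (auto simp: le_Suc_eq)

lemma J_upto_J_at_disjoint: "J_upto N \<inter> J_at N = {}"
  unfolding J_upto_def using jdepth_J_at by fastforce

lemma finite_J_at: "finite (J_at N)"
  unfolding J_at_def using finite_level by auto

lemma finite_J_upto: "finite (J_upto N)"
  by (induction N) (auto simp: J_upto_0 J_upto_Suc finite_J_at)

text \<open>The zeroth Fourier coefficient on the children of \<open>v\<close> is \<open>shift_adj f v\<close>, so the mass
  of \<open>f\<close> on level \<open>N + 1\<close> splits into that of \<open>shift_adj f\<close> on level \<open>N\<close> and the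
  coefficients along the \<open>w\<^sub>j\<close> of depth \<open>N + 1\<close>.\<close>

lemma sum_level_parseval:
  "(\<Sum>x\<in>level N. (cmod (f x))\<^sup>2) =
    (\<Sum>j\<in>J_upto N. (cmod (wcoef ((shift_adj ^^ (N - jdepth j)) f) j))\<^sup>2)"
proof (induction N arbitrary: f)
  case 0
  show ?case by (simp add: level_0 J_upto_0 jdepth_def wcoef_def)
next
  case (Suc N)
  let ?c = "\<lambda>j. (cmod (wcoef ((shift_adj ^^ (Suc N - jdepth j)) f) j))\<^sup>2"
  have "(\<Sum>x\<in>level (Suc N). (cmod (f x))\<^sup>2) = (\<Sum>v\<in>level N. \<Sum>u\<in>Chi E v. (cmod (f u))\<^sup>2)"
    unfolding level_Suc
    by (rule sum.UNION_disjoint) (use finite_level finite_Chi Chi_disjoint in auto)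
  also have "\<dots> = (\<Sum>v\<in>level N. (cmod (shift_adj f v))\<^sup>2) +
      (\<Sum>v\<in>level N. \<Sum>t\<in>{0<..<outdeg v}. (cmod (fcoef f v t))\<^sup>2)"
    by (simp add: sum.distrib sum_Chi_parseval subsetD[OF level_subset])
  also have "(\<Sum>v\<in>level N. (cmod (shift_adj f v))\<^sup>2) = (\<Sum>j\<in>J_upto N. ?c j)"
    unfolding Suc.IH
  proof (rule sum.cong[OF refl])
    fix j assume "j \<in> J_upto N"
    then have "Suc N - jdepth j = Suc (N - jdepth j)" unfolding J_upto_def by auto
    then show "(cmod (wcoef ((shift_adj ^^ (N - jdepth j)) (shift_adj f)) j))\<^sup>2 = ?c j"
      by (simp only: shift_adj_power_Suc)
  qed
  also have "(\<Sum>v\<in>level N. \<Sum>t\<in>{0<..<outdeg v}. (cmod (fcoef f v t))\<^sup>2) = (\<Sum>j\<in>J_at N. ?c j)"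
    unfolding J_at_def
    by (subst sum.Sigma) (auto intro!: sum.cong finite_level simp: wcoef_def jdepth_def depth_eq)
  also have "(\<Sum>j\<in>J_upto N. ?c j) + (\<Sum>j\<in>J_at N. ?c j) = (\<Sum>j\<in>J_upto (Suc N). ?c j)"
    unfolding J_upto_Suc
    by (rule sum.union_disjoint[symmetric]) (use finite_J_upto finite_J_at J_upto_J_at_disjoint in auto)
  finally show ?case .
qed

lemma bij_betw_snd_levels: "bij_betw snd (SIGMA N:UNIV. level N) V"
  unfolding bij_betw_def
proof
  show "inj_on snd (SIGMA N:UNIV. level N)"
    by (rule inj_onI) (auto intro: level_unique)
  show "snd ` (SIGMA N:UNIV. level N) = V"
  proof
    show "snd ` (SIGMA N:UNIV. level N) \<subseteq> V"
      using level_subset by (auto simp: subset_iff)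
    show "V \<subseteq> snd ` (SIGMA N:UNIV. level N)"
    proof
      fix x assume "x \<in> V"
      then have "(depth E r x, x) \<in> (SIGMA N:UNIV. level N)"
        by (simp add: in_level_depth)
      then show "x \<in> snd ` (SIGMA N:UNIV. level N)"
        by (rule rev_image_eqI) simp
    qed
  qed
qed

lemma ell2_ennormsq_by_level:
  "ell2_ennormsq V f = (\<Sum>\<^sub>\<infinity>N\<in>UNIV. \<Sum>x\<in>level N. ennreal ((cmod (f x))\<^sup>2))"
proof -
  have "ell2_ennormsq V f = (\<Sum>\<^sub>\<infinity>p\<in>(SIGMA N:UNIV. level N). ennreal ((cmod (f (snd p)))\<^sup>2))"
    unfolding ell2_ennormsq_def by (rule infsum_reindex_bij_betw[OF bij_betw_snd_levels, symmetric])
  also have "\<dots> = (\<Sum>\<^sub>\<infinity>N\<in>UNIV. \<Sum>x\<in>level N. ennreal ((cmod (f x))\<^sup>2))"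
    by (subst ennreal_infsum_Sigma_finite) (auto simp: finite_level)
  finally show ?thesis .
qed

lemma bij_betw_J_upto:
  "bij_betw (\<lambda>(N, j). (j, N - jdepth j)) (SIGMA N:UNIV. J_upto N) (J \<times> UNIV)"
  unfolding bij_betw_def
proof
  show "inj_on (\<lambda>(N, j). (j, N - jdepth j)) (SIGMA N:UNIV. J_upto N)"
    by (rule inj_onI) (auto simp: J_upto_def)
  show "(\<lambda>(N, j). (j, N - jdepth j)) ` (SIGMA N:UNIV. J_upto N) = J \<times> UNIV"
  proof (rule set_eqI, rule iffI)
    fix p assume "p \<in> J \<times> (UNIV :: nat set)"
    then have "(jdepth (fst p) + snd p, fst p) \<in> (SIGMA N:UNIV. J_upto N)"
      by (auto simp: J_upto_def)
    then show "p \<in> (\<lambda>(N, j). (j, N - jdepth j)) ` (SIGMA N:UNIV. J_upto N)"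
      by (rule rev_image_eqI) simp
  qed (auto simp: J_upto_def)
qed

lemma ell2_ennormsq_J_by_level:
  "ell2_ennormsq (J \<times> UNIV) c =
    (\<Sum>\<^sub>\<infinity>N\<in>UNIV. \<Sum>j\<in>J_upto N. ennreal ((cmod (c (j, N - jdepth j)))\<^sup>2))"
proof -
  have "ell2_ennormsq (J \<times> UNIV) c =
      (\<Sum>\<^sub>\<infinity>p\<in>(SIGMA N:UNIV. J_upto N). ennreal ((cmod (c (snd p, fst p - jdepth (snd p))))\<^sup>2))"
    unfolding ell2_ennormsq_def
    by (subst infsum_reindex_bij_betw[OF bij_betw_J_upto, symmetric]) (simp add: case_prod_beta)
  also have "\<dots> = (\<Sum>\<^sub>\<infinity>N\<in>UNIV. \<Sum>j\<in>J_upto N. ennreal ((cmod (c (j, N - jdepth j)))\<^sup>2))"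
    by (subst ennreal_infsum_Sigma_finite) (auto simp: finite_J_upto)
  finally show ?thesis .
qed

lemma ell2_ennormsq_wold: "ell2_ennormsq V f = ell2_ennormsq (J \<times> UNIV) (wold f)"
  unfolding ell2_ennormsq_by_level ell2_ennormsq_J_by_level
proof (rule infsum_cong)
  fix N :: nat
  have "(\<Sum>x\<in>level N. ennreal ((cmod (f x))\<^sup>2)) = ennreal (\<Sum>x\<in>level N. (cmod (f x))\<^sup>2)"
    by (rule sum_ennreal) simp
  also have "\<dots> = ennreal (\<Sum>j\<in>J_upto N. (cmod (wold f (j, N - jdepth j)))\<^sup>2)"
    unfolding sum_level_parseval
    by (intro arg_cong[where f = ennreal] sum.cong) (auto simp: wold_def J_upto_def)
  also have "\<dots> = (\<Sum>j\<in>J_upto N. ennreal ((cmod (wold f (j, N - jdepth j)))\<^sup>2))"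
    by (rule sum_ennreal[symmetric]) simp
  finally show "(\<Sum>x\<in>level N. ennreal ((cmod (f x))\<^sup>2)) =
      (\<Sum>j\<in>J_upto N. ennreal ((cmod (wold f (j, N - jdepth j)))\<^sup>2))" .
qed

lemma shift_adj_linear:
  "shift_adj (\<lambda>x. a * f x + b * g x) = (\<lambda>v. a * shift_adj f v + b * shift_adj g v)"
  unfolding shift_adj_def by (simp add: sum.distrib sum_distrib_left algebra_simps)

lemma shift_adj_power_linear:
  "(shift_adj ^^ n) (\<lambda>x. a * f x + b * g x) = (\<lambda>v. a * (shift_adj ^^ n) f v + b * (shift_adj ^^ n) g v)"
  by (induction n) (simp_all add: shift_adj_linear)

lemma wold_linear: "wold (\<lambda>x. a * f x + b * g x) = (\<lambda>p. a * wold f p + b * wold g p)"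
  unfolding wold_def wcoef_def by (rule ext) (simp add: shift_adj_power_linear fcoef_linear)

lemma wold_add: "wold (\<lambda>x. f x + g x) = (\<lambda>p. wold f p + wold g p)"
  using wold_linear[of 1 f 1 g] by simp

lemma wold_scale: "wold (\<lambda>x. a * f x) = (\<lambda>p. a * wold f p)"
  using wold_linear[of a f 0 f] by simp

lemma wold_inj:
  assumes "\<forall>x. x \<notin> V \<longrightarrow> f x = 0" "\<forall>x. x \<notin> V \<longrightarrow> g x = 0" and "wold f = wold g"
  shows "f = g"
proof -
  define d where "d x = 1 * f x + (-1) * g x" for x
  have "wold d = (\<lambda>p. 0)"
    unfolding d_def[abs_def] wold_linear assms(3) by simp
  then have "ell2_ennormsq V d = 0"
    unfolding ell2_ennormsq_wold by (simp add: ell2_ennormsq_def)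
  then have "ennreal ((cmod (d x))\<^sup>2) = 0" if "x \<in> V" for x
    unfolding ell2_ennormsq_def using that by (rule ennreal_infsum_eq_0D)
  then have "f x = g x" if "x \<in> V" for x
    using that by (simp add: d_def)
  then show ?thesis
    using assms(1,2) by fastforce
qed

lemma wcoef_S: "j \<in> J \<Longrightarrow> wcoef (S f) j = 0"
  unfolding J_def wcoef_def by (auto simp: S_apply fcoef_S)

lemma wold_S:
  assumes "\<forall>x. x \<notin> V \<longrightarrow> f x = 0"
  shows "wold (S f) = unilateral_shift (wold f)"
proof
  fix p :: "('a \<times> nat) \<times> nat"
  show "wold (S f) p = unilateral_shift (wold f) p"
  proof (cases "snd p")
    case 0
    then show ?thesis by (simp add: wold_def unilateral_shift_def wcoef_S)
  next
    case (Suc m)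
    then have "(shift_adj ^^ snd p) (S f) = (shift_adj ^^ m) f"
      by (simp only: shift_adj_power_Suc shift_adj_S[OF assms])
    then show ?thesis using Suc by (simp add: wold_def unilateral_shift_def)
  qed
qed

lemma S_ell2: "f \<in> ell2 V \<Longrightarrow> S f \<in> ell2 V"
  using ell2_ennormsq_wold[of f] ell2_ennormsq_wold[of "S f"]
  by (auto simp: ell2_iff wold_S ell2_ennormsq_unilateral_shift S_apply)

text \<open>\<open>synth_level N d\<close> gives, on level \<open>N\<close>, the vector whose coefficients along the
  \<open>S\<^sup>n w\<^sub>j\<close> are \<open>d (j, n)\<close>: on the children of \<open>v\<close> it is the inverse Fourier transform of
  the coefficients \<open>shift_adj\<close> at \<open>v\<close> (computed recursively one level up, from the shifted \<open>d\<close>)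
  and \<open>d ((v, t), 0)\<close> for \<open>0 < t\<close>.\<close>

primrec synth_level :: "nat \<Rightarrow> (('a \<times> nat) \<times> nat \<Rightarrow> complex) \<Rightarrow> 'a \<Rightarrow> complex" where
  "synth_level 0 d = (\<lambda>x. d ((r, 0), 0))"
| "synth_level (Suc N) d = (\<lambda>u. let v = parent E u in
      idft (outdeg v)
        (\<lambda>t. if t = 0 then synth_level N (\<lambda>p. d (fst p, Suc (snd p))) v else d ((v, t), 0))
        (child_index v u))"

lemma fcoef_synth_level:
  assumes "\<forall>x\<in>level (Suc N). g x = synth_level (Suc N) d x" and v: "v \<in> level N"
    and t: "t < outdeg v"
  shows "fcoef g v t =
    (if t = 0 then synth_level N (\<lambda>p. d (fst p, Suc (snd p))) v else d ((v, t), 0))"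
proof -
  define a where
    "a t = (if t = 0 then synth_level N (\<lambda>p. d (fst p, Suc (snd p))) v else d ((v, t), 0))" for t
  have "g (child v i) = idft (outdeg v) a i" if "i < outdeg v" for i
  proof -
    have c: "child v i \<in> Chi E v" by (rule child_in_Chi[OF that])
    then have "child v i \<in> level (Suc N)" using Chi_level[OF v] by blast
    then have "g (child v i) = synth_level (Suc N) d (child v i)" using assms(1) by blast
    also have "\<dots> = idft (outdeg v) a i"
      unfolding synth_level.simps Let_def parent_Chi[OF c] child_index_child[OF that] a_def ..
    finally show ?thesis .
  qed
  then have "fcoef g v t = dft (outdeg v) (idft (outdeg v) a) t"
    unfolding fcoef_def by (rule dft_cong)
  also have "\<dots> = a t"
    using outdeg_pos level_subset v t by (blast intro: dft_idft)
  finally show ?thesis unfolding a_def .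
qed

lemma wcoef_synth_level:
  assumes "\<forall>x\<in>level N. g x = synth_level N d x" and "j \<in> J_upto N"
  shows "wcoef ((shift_adj ^^ (N - jdepth j)) g) j = d (j, N - jdepth j)"
  using assms
proof (induction N arbitrary: d g j)
  case 0
  then show ?case by (simp add: J_upto_0 level_0 wcoef_def jdepth_def)
next
  case (Suc N)
  define d' where "d' = (\<lambda>p. d (fst p, Suc (snd p)))"
  have "shift_adj g v = synth_level N d' v" if "v \<in> level N" for v
    using fcoef_synth_level[OF Suc.prems(1) that outdeg_pos] that level_subset
    by (auto simp flip: fcoef_0 simp: d'_def)
  then have "\<forall>v\<in>level N. shift_adj g v = synth_level N d' v" ..
  note IH = Suc.IH[OF this]
  consider "j \<in> J_upto N" | "j \<in> J_at N"
    using Suc.prems(2) by (auto simp: J_upto_Suc)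
  then show ?case
  proof cases
    case 1
    then have "Suc N - jdepth j = Suc (N - jdepth j)" unfolding J_upto_def by auto
    then show ?thesis using IH[OF 1] by (simp only: shift_adj_power_Suc) (simp add: d'_def)
  next
    case 2
    then obtain v t where "j = (v, t)" "v \<in> level N" "0 < t" "t < outdeg v"
      by (auto simp: J_at_def)
    then show ?thesis
      using fcoef_synth_level[OF Suc.prems(1)] jdepth_J_at[OF 2] by (simp add: wcoef_def)
  qed
qed

definition synth :: "(('a \<times> nat) \<times> nat \<Rightarrow> complex) \<Rightarrow> 'a \<Rightarrow> complex" where
  "synth d x = (if x \<in> V then synth_level (depth E r x) d x else 0)"

lemma wold_synth:
  assumes "\<forall>p. fst p \<notin> J \<longrightarrow> d p = 0"
  shows "wold (synth d) = d"
proof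
  fix p :: "('a \<times> nat) \<times> nat"
  obtain j n where p: "p = (j, n)" by (cases p)
  show "wold (synth d) p = d p"
  proof (cases "j \<in> J")
    case True
    have "\<forall>x\<in>level (jdepth j + n). synth d x = synth_level (jdepth j + n) d x"
      by (auto simp: synth_def level_iff)
    moreover have "j \<in> J_upto (jdepth j + n)"
      using True by (simp add: J_upto_def)
    ultimately have "wcoef ((shift_adj ^^ n) (synth d)) j = d (j, n)"
      using wcoef_synth_level[of "jdepth j + n" "synth d" d j] by simp
    then show ?thesis using True p by (simp add: wold_def)
  next
    case False
    then show ?thesis using assms[rule_format, of p] p by (simp add: wold_def)
  qed
qed

lemma wold_bij: "bij_betw wold (ell2 V) (ell2 (J \<times> UNIV))"
  unfolding bij_betw_def
proof
  show "inj_on wold (ell2 V)"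
    by (rule inj_onI) (rule wold_inj, auto simp: ell2_iff)
  show "wold ` ell2 V = ell2 (J \<times> UNIV)"
  proof
    show "wold ` ell2 V \<subseteq> ell2 (J \<times> UNIV)"
      by (auto simp: ell2_iff wold_def simp flip: ell2_ennormsq_wold)
    show "ell2 (J \<times> UNIV) \<subseteq> wold ` ell2 V"
    proof
      fix d :: "('a \<times> nat) \<times> nat \<Rightarrow> complex"
      assume d: "d \<in> ell2 (J \<times> UNIV)"
      then have "wold (synth d) = d"
        by (intro wold_synth) (auto simp: ell2_iff)
      moreover have "synth d \<in> ell2 V"
        using d calculation by (simp add: ell2_iff ell2_ennormsq_wold synth_def)
      ultimately show "d \<in> wold ` ell2 V" by (metis imageI)
    qed
  qed
qed

theorem unitarily_equivalent_unilateral_shift: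
  "unitarily_equivalent V S (J \<times> UNIV) unilateral_shift"
  unfolding unitarily_equivalent_def
proof (intro exI[of _ wold] conjI ballI allI)
  fix f assume f: "f \<in> ell2 V"
  show "ell2_normsq (J \<times> UNIV) (wold f) = ell2_normsq V f"
    using f bij_betw_apply[OF wold_bij f] by (intro ell2_normsq_eqI) (simp_all add: ell2_ennormsq_wold)
  show "wold (S f) = unilateral_shift (wold f)"
    using f by (intro wold_S) (simp add: ell2_iff)
qed (simp_all add: wold_bij wold_add wold_scale)

lemma ecard_J: "ecard J = 1 + (\<Sum>\<^sub>\<infinity>v\<in>branching V E. of_nat (card (Chi E v) - 1))"
proof -
  have "(\<Sum>\<^sub>\<infinity>v\<in>branching V E. (of_nat (card (Chi E v) - 1) :: ennreal)) =
      (\<Sum>\<^sub>\<infinity>v\<in>V. of_nat (outdeg v - 1))"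
    by (rule infsum_cong_neutral) (auto simp: branching_def outdeg_def)
  also have "\<dots> = (\<Sum>\<^sub>\<infinity>v\<in>V. \<Sum>t\<in>{0<..<outdeg v}. (1::ennreal))"
    by simp
  also have "\<dots> = (\<Sum>\<^sub>\<infinity>p\<in>(SIGMA v:V. {0<..<outdeg v}). (1::ennreal))"
    by (rule ennreal_infsum_Sigma_finite[symmetric]) simp
  also have "\<dots> = ecard (SIGMA v:V. {0<..<outdeg v})"
    by (rule infsum_one_eq_ecard)
  finally show ?thesis
    unfolding J_def by (simp add: ecard_def)
qed

lemma countable_J: "countable V \<Longrightarrow> countable J"
  unfolding J_def by auto

end

theorem mainTheorem2:
  fixes V1 :: "'a set" and E1 :: "('a \<times> 'a) set" and r1 :: 'a
    and V2 :: "'b set" and E2 :: "('b \<times> 'b) set" and r2 :: 'b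
  assumes "rooted_directed_tree V1 E1 r1" "leafless V1 E1" "locally_finite V1 E1"
      and "countable V1" "infinite V1"
      and "rooted_directed_tree V2 E2 r2" "leafless V2 E2" "locally_finite V2 E2"
      and "countable V2" "infinite V2"
  shows "unitarily_equivalent V1 (dirichlet_shift V1 E1 r1 1) V2 (dirichlet_shift V2 E2 r2 1)
     \<longleftrightarrow> (\<Sum>\<^sub>\<infinity>v\<in>branching V1 E1. (of_nat (card (Chi E1 v) - 1) :: ennreal))
       = (\<Sum>\<^sub>\<infinity>v\<in>branching V2 E2. (of_nat (card (Chi E2 v) - 1) :: ennreal))"
proof -
  interpret T1: leafless_tree V1 E1 r1 using assms(1-3) by unfold_locales
  interpret T2: leafless_tree V2 E2 r2 using assms(6-8) by unfold_locales
  have "unitarily_equivalent V1 T1.S V2 T2.S \<longleftrightarrow>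
      unitarily_equivalent (T1.J \<times> UNIV) unilateral_shift (T2.J \<times> UNIV) unilateral_shift"
    by (intro unitarily_equivalent_iff_models T1.unitarily_equivalent_unilateral_shift
        T2.unitarily_equivalent_unilateral_shift T1.S_ell2 T2.S_ell2)
  also have "\<dots> \<longleftrightarrow> ecard T1.J = ecard T2.J"
    using assms(4,9) by (intro unitarily_equivalent_unilateral_shift_iff T1.countable_J T2.countable_J)
  also have "\<dots> \<longleftrightarrow> (\<Sum>\<^sub>\<infinity>v\<in>branching V1 E1. (of_nat (card (Chi E1 v) - 1) :: ennreal))
       = (\<Sum>\<^sub>\<infinity>v\<in>branching V2 E2. of_nat (card (Chi E2 v) - 1))"
    unfolding T1.ecard_J T2.ecard_J by (simp add: ennreal_add_left_cancel)
  finally show ?thesis .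
qed

end
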